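(* Let $n\ge 1$ and $k\ge 2$ be integers and let ${\boldsymbol A}\in\mathbb{R}^{n\times n}$ be a symmetric matrix. Let ${\boldsymbol\sigma}=({\boldsymbol\sigma}_1,\dots,{\boldsymbol\sigma}_n)$ be a local maximum of $F_{\boldsymbol A}({\boldsymbol\sigma})=\sum_{i,j=1}^n A_{ij}\langle{\boldsymbol\sigma}_i,{\boldsymbol\sigma}_j\rangle$ over the manifold ${\sf S}(n,k)=\{({\boldsymbol\sigma}_1,\dots,{\boldsymbol\sigma}_n): {\boldsymbol\sigma}_i\in\mathbb{R}^k,\ \|{\boldsymbol\sigma}_i\|_2=1\ \forall i\}$. Then $$ {\sf SDP}({\boldsymbol A})\ \ge\ F_{\boldsymbol A}({\boldsymbol\sigma})\ \ge\ {\sf SDP}({\boldsymbol A})-\frac{8}{\sqrt{k}}\, n\,\|{\boldsymbol A}\|_2, $$ where ${\sf SDP}({\boldsymbol A})=\max\{\langle {\boldsymbol A},{\boldsymbol X}\rangle : {\boldsymbol X}\in\mathbb{R}^{n\times n},\ {\boldsymbol X}\succeq 0,\ X_{ii}=1\ \forall i\in[n]\}$.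
   Context: $\langle{\boldsymbol A},{\boldsymbol B}\rangle={\rm Tr}({\boldsymbol A}^{\sf T}{\boldsymbol B})$ is the matrix scalar product; $\|{\boldsymbol A}\|_2$ is the $\ell_2$ operator norm of ${\boldsymbol A}$. ${\sf S}(n,k)$ is identified with the set of $n\times k$ real matrices whose rows are unit vectors (a product of $n$ copies of the sphere ${\sf S}^{k-1}$), and "local maximum" refers to this manifold structure. *)

theory Defs
  imports "HOL-Analysis.Analysis"
begin

definition sphere_prod :: "((real^'k)^'n) set" where
  "sphere_prod = {\<sigma>. \<forall>i. norm (\<sigma> $ i) = 1}"

definition F_A :: "real^'n^'n \<Rightarrow> (real^'k)^'n \<Rightarrow> real" where
  "F_A A \<sigma> = (\<Sum>i\<in>UNIV. \<Sum>j\<in>UNIV. A $ i $ j * (\<sigma> $ i \<bullet> \<sigma> $ j))"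

definition mat_inner :: "real^'n^'n \<Rightarrow> real^'n^'n \<Rightarrow> real" where
  "mat_inner A B = (\<Sum>i\<in>UNIV. \<Sum>j\<in>UNIV. A $ i $ j * B $ i $ j)"

definition psd :: "real^'n^'n \<Rightarrow> bool" where
  "psd X \<longleftrightarrow> transpose X = X \<and> (\<forall>x. x \<bullet> (X *v x) \<ge> 0)"

definition SDP :: "real^'n^'n \<Rightarrow> real" where
  "SDP A = Sup {mat_inner A X | X. psd X \<and> (\<forall>i. X $ i $ i = 1)}"

definition local_max_on :: "('a::topological_space \<Rightarrow> real) \<Rightarrow> 'a set \<Rightarrow> 'a \<Rightarrow> bool" where
  "local_max_on f S x \<longleftrightarrow> x \<in> S \<and> (\<exists>U. open U \<and> x \<in> U \<and> (\<forall>y\<in>S \<inter> U. f y \<le> f x))"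

definition op_norm2 :: "real^'n^'n \<Rightarrow> real" where
  "op_norm2 A = onorm (\<lambda>x. A *v x)"

end

(*
  At a local maximum sigma of F_A on the product of spheres, moving along the curves
  t |-> (sigma_i + t u_i) / |sigma_i + t u_i| for a tangent field u (u_i orthogonal to sigma_i)
  and averaging t with -t gives the second-order condition
    <A, (u_i . u_j)> <= <A, (S_ij (|u_i|^2 + |u_j|^2) / 2)>,   where S = (sigma_i . sigma_j).
  For a feasible X = W W^T use the tangent fields u_(a,p)(i) = W_ip (e_a - sigma_i(a) sigma_i).
  As sum_a (e_a - x_a x) . (e_a - y_a y) = k - 2 + (x . y)^2 for unit vectors x, y, summing the
  second-order condition over all (a, p) gives
    (k - 2) <A, X> + <A, X o S o S> <= (k - 1) F_A(sigma).
  The Hadamard product X o S o S is again feasible (Schur product theorem) and |<A, Y>| <= n |A|_2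
  for every feasible Y, so <A, X> <= F_A(sigma) + 2 n |A|_2 / (k - 1) <= F_A(sigma) + 8 n |A|_2 / sqrt k.
  The other inequality holds because S itself is feasible.
*)

theory Submission
  imports Defs
begin

definition outer :: "real^'n \<Rightarrow> real^'n^'n" where
  "outer x = (\<chi> i j. x $ i * x $ j)"

definition gram :: "('q::finite \<Rightarrow> real^'n) \<Rightarrow> real^'n^'n" where
  "gram w = (\<Sum>q\<in>UNIV. outer (w q))"

lemma outer_nth [simp]: "outer x $ i $ j = x $ i * x $ j"
  by (simp add: outer_def)

lemma outer_zero [simp]: "outer 0 = 0"
  by (simp add: vec_eq_iff)

lemma gram_nth: "gram w $ i $ j = (\<Sum>q\<in>UNIV. w q $ i * w q $ j)"
  by (simp add: gram_def)

lemma inner_outer: "A \<bullet> outer x = x \<bullet> (A *v x)"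
  by (simp add: inner_vec_def matrix_vector_mult_def sum_distrib_left mult_ac)

lemma outer_inner_outer: "outer x \<bullet> outer y = (x \<bullet> y)\<^sup>2"
  by (simp add: inner_vec_def inner_real_def power2_eq_square sum_product mult_ac)

lemma mat_inner_eq_inner: "mat_inner A B = A \<bullet> B"
  by (simp add: mat_inner_def inner_vec_def)

lemma psd_symmetric: "psd X \<Longrightarrow> X $ i $ j = X $ j $ i"
  unfolding psd_def by (metis transpose_def vec_lambda_beta)

lemma psd_gram: "psd (gram w)"
proof -
  have "x \<bullet> (gram w *v x) = (\<Sum>q\<in>UNIV. (w q \<bullet> x)\<^sup>2)" for x
    unfolding inner_outer[symmetric] gram_def inner_sum_left outer_inner_outer ..
  then show ?thesis
    by (simp add: psd_def transpose_def vec_eq_iff gram_nth mult.commute sum_nonneg)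
qed

lemma quadratic_form_axis: "axis i 1 \<bullet> (X *v axis j 1) = X $ i $ j"
  by (simp add: inner_axis' matrix_vector_mult_basis column_def)

lemma psd_diag_nonneg: "psd X \<Longrightarrow> 0 \<le> X $ i $ i"
  using quadratic_form_axis[of i X i] unfolding psd_def by metis

lemma quadratic_form_add_axis:
  assumes "transpose X = X"
  shows "(x + s *\<^sub>R axis p 1) \<bullet> (X *v (x + s *\<^sub>R axis p 1))
           = x \<bullet> (X *v x) + 2 * s * (X *v x) $ p + s\<^sup>2 * X $ p $ p"
proof -
  have "axis p 1 \<bullet> (X *v x) = x \<bullet> (X *v axis p 1)"
    by (metis assms dot_lmul_matrix inner_commute transpose_matrix_vector)
  then show ?thesis
    by (simp add: algebra_simps inner_add_right quadratic_form_axis inner_axis'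
        matrix_vector_mult_basis column_def power2_eq_square)
qed

lemma psd_row_zero_if_diag_zero:
  assumes "psd X" "X $ p $ p = 0"
  shows "X $ p $ j = 0"
proof -
  have "0 \<le> axis j 1 \<bullet> (X *v axis j 1) + 2 * s * (X *v axis j 1) $ p" for s
    using assms quadratic_form_add_axis[of X "axis j 1" s p] unfolding psd_def
    by (metis add.right_neutral mult_zero_right)
  then have "0 \<le> X $ j $ j + 2 * s * X $ p $ j" for s
    by (simp add: inner_axis' matrix_vector_mult_basis column_def)
  \<comment> \<open>an affine function of \<open>s\<close> that is bounded below has slope zero\<close>
  from this[of "- (X $ j $ j + 1) / (2 * X $ p $ j)"] show ?thesis
    by (cases "X $ p $ j = 0") (simp_all add: field_simps)
qed

lemma psd_split_off_row:
  assumes "psd X"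
  obtains v where "psd (X - outer v)" "\<And>j. X $ p $ j = v $ p * v $ j"
    and "\<And>i. X $ i $ p = 0 \<Longrightarrow> v $ i = 0"
proof (cases "X $ p $ p = 0")
  case True
  then show ?thesis
    using that[of 0] assms psd_row_zero_if_diag_zero[OF assms True] by simp
next
  case False
  then have pos: "0 < X $ p $ p" using psd_diag_nonneg[OF assms, of p] by simp
  have sym: "\<And>i j. X $ i $ j = X $ j $ i" using assms psd_symmetric by blast
  define v where "v = (\<chi> i. X $ i $ p / sqrt (X $ p $ p))"
  have row: "X $ p $ j = v $ p * v $ j" for j
    using pos sym[of j p] by (simp add: v_def real_sqrt_mult[symmetric])
  have "0 \<le> x \<bullet> ((X - outer v) *v x)" for x
  proof -
    define s where "s = - (X *v x) $ p / X $ p $ p"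
    have "v \<bullet> x = (\<Sum>i\<in>UNIV. X $ p $ i * x $ i) / sqrt (X $ p $ p)"
      unfolding v_def inner_vec_def sum_divide_distrib
    proof (intro sum.cong refl)
      show "(\<chi> i. X $ i $ p / sqrt (X $ p $ p)) $ i \<bullet> x $ i = X $ p $ i * x $ i / sqrt (X $ p $ p)" for i
        using sym[of i p] by simp
    qed
    then have vx: "v \<bullet> x = (X *v x) $ p / sqrt (X $ p $ p)"
      by (simp add: matrix_vector_mult_def)
    have "0 \<le> (x + s *\<^sub>R axis p 1) \<bullet> (X *v (x + s *\<^sub>R axis p 1))"
      using assms unfolding psd_def by blast
    also have "\<dots> = x \<bullet> (X *v x) - (v \<bullet> x)\<^sup>2"
      using assms pos unfolding quadratic_form_add_axis[OF conjunct1[OF assms[unfolded psd_def]]]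
      by (simp add: s_def vx power_divide power2_eq_square field_simps)
    also have "\<dots> = x \<bullet> ((X - outer v) *v x)"
      using inner_outer[of "outer v" x, unfolded outer_inner_outer]
      by (simp add: matrix_vector_mult_diff_rdistrib inner_diff_right inner_commute)
    finally show ?thesis .
  qed
  moreover have "transpose (X - outer v) = X - outer v"
    by (simp add: transpose_def vec_eq_iff mult.commute) (metis sym)
  ultimately have "psd (X - outer v)" by (simp add: psd_def)
  moreover have "X $ i $ p = 0 \<Longrightarrow> v $ i = 0" for i by (simp add: v_def)
  ultimately show ?thesis using that row by blast
qed

lemma psd_gram_factorization_on:
  assumes "finite D" "psd X" "\<And>i j. i \<notin> D \<Longrightarrow> X $ i $ j = 0"
  shows "\<exists>w. \<forall>i j. X $ i $ j = (\<Sum>p\<in>D. w p $ i * w p $ j)"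
  using assms
proof (induction D arbitrary: X rule: finite_induct)
  case empty
  then show ?case by simp
next
  case (insert p D)
  obtain v where psd': "psd (X - outer v)"
    and row: "\<And>j. X $ p $ j = v $ p * v $ j" and col: "\<And>i. X $ i $ p = 0 \<Longrightarrow> v $ i = 0"
    using psd_split_off_row[OF insert.prems(1), of p] by metis
  have "(X - outer v) $ i $ j = 0" if "i \<notin> D" for i j
  proof (cases "i = p")
    case True
    then show ?thesis by (simp add: row)
  next
    case False
    then have "i \<notin> insert p D" using that by simp
    then show ?thesis using insert.prems(2) col by simp
  qed
  then obtain w where w: "\<And>i j. (X - outer v) $ i $ j = (\<Sum>q\<in>D. w q $ i * w q $ j)"
    using insert.IH[OF psd'] by metis
  have "X $ i $ j = (\<Sum>q\<in>insert p D. (w(p := v)) q $ i * (w(p := v)) q $ j)" for i j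
  proof -
    have "(\<Sum>q\<in>D. (w(p := v)) q $ i * (w(p := v)) q $ j) = (\<Sum>q\<in>D. w q $ i * w q $ j)"
      using insert.hyps(2) by (intro sum.cong) auto
    then show ?thesis using insert.hyps w[of i j] by simp
  qed
  then show ?case by (intro exI[of _ "w(p := v)"] allI)
qed

lemma psd_gram_factorization: "psd X \<Longrightarrow> \<exists>w::'n \<Rightarrow> real^'n. X = gram w"
  using psd_gram_factorization_on[of UNIV X] by (auto simp: gram_nth vec_eq_iff)


lemma hadamard_gram:
  "(\<chi> i j. gram w $ i $ j * gram v $ i $ j) = gram (\<lambda>(q, r). w q * v r)"
proof -
  have "gram w $ i $ j * gram v $ i $ j
        = (\<Sum>(q, r)\<in>UNIV \<times> UNIV. (w q $ i * w q $ j) * (v r $ i * v r $ j))"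
    and "gram (\<lambda>(q, r). w q * v r) $ i $ j
        = (\<Sum>(q, r)\<in>UNIV \<times> UNIV. (w q $ i * w q $ j) * (v r $ i * v r $ j))" for i j
    unfolding gram_nth sum_product sum.cartesian_product UNIV_Times_UNIV
    by (rule refl, rule sum.cong) (auto simp: mult_ac)
  then show ?thesis by (simp add: vec_eq_iff)
qed

lemma psd_hadamard:
  fixes X Y :: "real^'n^'n"
  assumes "psd X" "psd Y"
  shows "psd (\<chi> i j. X $ i $ j * Y $ i $ j)"
proof -
  obtain w v :: "'n \<Rightarrow> real^'n" where "X = gram w" "Y = gram v"
    using psd_gram_factorization assms by metis
  then show ?thesis by (simp only: hadamard_gram psd_gram)
qed

lemma psd_inner_matrix:
  fixes x :: "'n::finite \<Rightarrow> real^'k"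
  shows "psd (\<chi> i j. x i \<bullet> x j)"
proof -
  have "(\<chi> i j. x i \<bullet> x j) = gram (\<lambda>a. \<chi> i. x i $ a)"
    by (simp add: gram_nth vec_eq_iff inner_vec_def)
  then show ?thesis by (simp add: psd_gram)
qed

lemma abs_inner_gram_le:
  fixes A :: "real^'n^'n"
  shows "\<bar>A \<bullet> gram w\<bar> \<le> op_norm2 A * (\<Sum>i\<in>UNIV. gram w $ i $ i)"
proof -
  have "\<bar>A \<bullet> gram w\<bar> \<le> (\<Sum>q\<in>UNIV. \<bar>w q \<bullet> (A *v w q)\<bar>)"
    unfolding gram_def inner_sum_right inner_outer by (rule sum_abs)
  also have "\<dots> \<le> (\<Sum>q\<in>UNIV. op_norm2 A * (w q \<bullet> w q))"
  proof (rule sum_mono)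
    fix q
    have "\<bar>w q \<bullet> (A *v w q)\<bar> \<le> norm (w q) * norm (A *v w q)"
      by (rule Cauchy_Schwarz_ineq2)
    also have "\<dots> \<le> norm (w q) * (op_norm2 A * norm (w q))"
      unfolding op_norm2_def by (intro mult_left_mono onorm) simp_all
    finally show "\<bar>w q \<bullet> (A *v w q)\<bar> \<le> op_norm2 A * (w q \<bullet> w q)"
      by (simp add: power2_norm_eq_inner[symmetric] power2_eq_square mult_ac)
  qed
  also have "\<dots> = op_norm2 A * (\<Sum>q\<in>UNIV. \<Sum>i\<in>UNIV. w q $ i * w q $ i)"
    by (simp add: inner_vec_def sum_distrib_left)
  also have "\<dots> = op_norm2 A * (\<Sum>i\<in>UNIV. gram w $ i $ i)"
    unfolding gram_nth by (subst sum.swap) (rule refl)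
  finally show ?thesis .
qed

lemma abs_inner_unit_diag_psd_le:
  fixes A :: "real^'n^'n"
  assumes "psd X" "\<forall>i. X $ i $ i = 1"
  shows "\<bar>A \<bullet> X\<bar> \<le> CARD('n) * op_norm2 A"
proof -
  obtain w :: "'n \<Rightarrow> real^'n" where "X = gram w" using psd_gram_factorization[OF assms(1)] by blast
  moreover have "(\<Sum>i\<in>UNIV. X $ i $ i) = CARD('n)" using assms(2) by simp
  ultimately show ?thesis using abs_inner_gram_le[of A w] by (simp add: mult.commute)
qed

lemma SDP_upper:
  fixes A :: "real^'n^'n"
  assumes "psd X" "\<forall>i. X $ i $ i = 1"
  shows "A \<bullet> X \<le> SDP A"
  unfolding SDP_def mat_inner_eq_inner
proof (rule cSup_upper)
  show "bdd_above {A \<bullet> X |X. psd X \<and> (\<forall>i. X $ i $ i = 1)}"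
  proof (rule bdd_aboveI)
    fix y assume "y \<in> {A \<bullet> X |X. psd X \<and> (\<forall>i. X $ i $ i = 1)}"
    then obtain X where "y = A \<bullet> X" "psd X" "\<forall>i. X $ i $ i = 1" by blast
    then show "y \<le> CARD('n) * op_norm2 A" using abs_inner_unit_diag_psd_le[of X A] by simp
  qed
qed (use assms in blast)

lemma SDP_least:
  fixes A :: "real^'n^'n"
  assumes "\<And>X. psd X \<Longrightarrow> \<forall>i. X $ i $ i = 1 \<Longrightarrow> A \<bullet> X \<le> c"
  shows "SDP A \<le> c"
  unfolding SDP_def mat_inner_eq_inner
proof (rule cSup_least)
  have "psd (mat 1 :: real^'n^'n)" by (simp add: psd_def)
  moreover have "\<forall>i. (mat 1 :: real^'n^'n) $ i $ i = 1" by (simp add: mat_def)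
  ultimately show "{A \<bullet> X |X. psd X \<and> (\<forall>i. X $ i $ i = 1)} \<noteq> {}" by blast
qed (use assms in blast)

lemma eventually_at_zero_mirror:
  assumes "eventually P (at (0::real))"
  shows "eventually (\<lambda>t. P (- t)) (at 0)"
proof -
  have "filtermap uminus (at (0::real)) = at 0"
    using filtermap_at_minus[of "0::real"] by simp
  then show ?thesis using assms by (metis eventually_filtermap)
qed

lemma second_difference_nonpos:
  fixes \<phi> g :: "real \<Rightarrow> real"
  assumes max: "\<forall>\<^sub>F t in at 0. \<phi> t \<le> \<phi> 0"
    and diff: "\<And>t. \<phi> t + \<phi> (- t) - 2 * \<phi> 0 = t\<^sup>2 * g t"
    and cont: "isCont g 0"
  shows "g 0 \<le> 0"
proof (rule tendsto_upperbound)
  show "(g \<longlongrightarrow> g 0) (at 0)" using cont by (simp add: isCont_def)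
  have "\<forall>\<^sub>F t in at 0. t \<noteq> 0" by (simp add: eventually_at_filter)
  then show "\<forall>\<^sub>F t in at 0. g t \<le> 0" using max eventually_at_zero_mirror[OF max]
  proof eventually_elim
    case (elim t)
    then have "t\<^sup>2 * g t \<le> 0" using diff[of t] by linarith
    moreover have "0 < t\<^sup>2" using \<open>t \<noteq> 0\<close> by simp
    ultimately show "g t \<le> 0" by (simp add: mult_le_0_iff)
  qed
qed simp

lemma local_max_on_along_curve:
  assumes "local_max_on f S x" "isCont \<gamma> 0" "\<gamma> 0 = x" "\<And>t. \<gamma> t \<in> S"
  shows "\<forall>\<^sub>F t in at 0. f (\<gamma> t) \<le> f x"
proof -
  obtain U where U: "open U" "x \<in> U" "\<forall>y\<in>S \<inter> U. f y \<le> f x"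
    using assms(1) unfolding local_max_on_def by blast
  have "(\<gamma> \<longlongrightarrow> x) (at 0)" using assms(2,3) by (simp add: isCont_def)
  then have "\<forall>\<^sub>F t in at 0. \<gamma> t \<in> U" using U(1,2) by (rule topological_tendstoD)
  then show ?thesis by eventually_elim (use U(3) assms(4) in blast)
qed

lemma local_max_on_row_unit:
  assumes "local_max_on f sphere_prod \<sigma>"
  shows "\<sigma> $ i \<bullet> \<sigma> $ i = 1"
  using assms by (simp add: local_max_on_def sphere_prod_def norm_eq_1)

lemma F_A_eq_inner: "F_A A \<sigma> = A \<bullet> (\<chi> i j. \<sigma> $ i \<bullet> \<sigma> $ j)"
  by (simp add: F_A_def inner_vec_def)

text \<open>For a tangent field \<open>u\<close> of a point \<open>\<sigma>\<close> of \<open>sphere_prod\<close> the scaling factor is the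
  inverse norm of the row \<open>\<sigma> $ i + t *\<^sub>R u $ i\<close>, so every row is normalised.\<close>

definition sphere_shift :: "(real^'k)^'n \<Rightarrow> (real^'k)^'n \<Rightarrow> real \<Rightarrow> (real^'k)^'n" where
  "sphere_shift \<sigma> u t = (\<chi> i. (1 / sqrt (1 + t\<^sup>2 * (u $ i \<bullet> u $ i))) *\<^sub>R (\<sigma> $ i + t *\<^sub>R u $ i))"

lemma radicand_pos: "0 < 1 + t\<^sup>2 * (x \<bullet> x)"
  by (simp add: add_pos_nonneg)

lemma radicand_nonzero: "1 + t\<^sup>2 * (x \<bullet> x) \<noteq> 0"
  using radicand_pos[of t x] by linarith

lemma sphere_shift_zero [simp]: "sphere_shift \<sigma> u 0 = \<sigma>"
  by (simp add: sphere_shift_def vec_eq_iff)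

lemma sphere_shift_inner:
  "sphere_shift \<sigma> u t $ i \<bullet> sphere_shift \<sigma> u t $ j
     = (\<sigma> $ i + t *\<^sub>R u $ i) \<bullet> (\<sigma> $ j + t *\<^sub>R u $ j)
         / (sqrt (1 + t\<^sup>2 * (u $ i \<bullet> u $ i)) * sqrt (1 + t\<^sup>2 * (u $ j \<bullet> u $ j)))"
  by (simp only: sphere_shift_def vec_lambda_beta inner_scaleR_left inner_scaleR_right) simp

lemma sphere_shift_in_sphere_prod:
  assumes "\<And>i. \<sigma> $ i \<bullet> \<sigma> $ i = 1" "\<And>i. u $ i \<bullet> \<sigma> $ i = 0"
  shows "sphere_shift \<sigma> u t \<in> sphere_prod"
proof -
  have "sphere_shift \<sigma> u t $ i \<bullet> sphere_shift \<sigma> u t $ i = 1" for i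
    using assms[of i] radicand_pos[of t "u $ i"]
    by (simp add: sphere_shift_inner inner_add_left inner_add_right inner_commute
        power2_eq_square[symmetric])
  then show ?thesis by (simp add: sphere_prod_def norm_eq_1)
qed

lemma isCont_sphere_shift: "isCont (sphere_shift \<sigma> u) t"
proof -
  have "continuous_on UNIV (sphere_shift \<sigma> u)"
    unfolding sphere_shift_def by (intro continuous_intros) (simp_all add: radicand_nonzero)
  then show ?thesis by (simp add: continuous_on_eq_continuous_at)
qed

lemma inner_shifts_even_part:
  fixes x y x' y' :: "'a::real_inner"
  shows "(x + t *\<^sub>R y) \<bullet> (x' + t *\<^sub>R y') + (x + (- t) *\<^sub>R y) \<bullet> (x' + (- t) *\<^sub>R y')
           = 2 * (x \<bullet> x' + t\<^sup>2 * (y \<bullet> y'))"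
  by (simp add: inner_add_left inner_add_right algebra_simps power2_eq_square)

lemma normalized_second_difference:
  fixes a b s v t :: real
  assumes "0 \<le> a" "0 \<le> b"
  defines "q \<equiv> sqrt (1 + t\<^sup>2 * a) * sqrt (1 + t\<^sup>2 * b)"
  shows "2 * (s + t\<^sup>2 * v) / q - 2 * s
           = t\<^sup>2 * (2 * (v / q - s * ((a + b + t\<^sup>2 * a * b) / (q * (1 + q)))))"
proof -
  have q: "0 < q" using assms by (simp add: add_pos_nonneg)
  have "q\<^sup>2 = 1 + t\<^sup>2 * (a + b + t\<^sup>2 * a * b)"
    using assms by (simp add: q_def power_mult_distrib add_nonneg_nonneg algebra_simps power2_eq_square)
  then have "t\<^sup>2 * ((a + b + t\<^sup>2 * a * b) / (q * (1 + q))) = ((q - 1) * (1 + q)) / (q * (1 + q))"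
    by (simp add: power2_eq_square algebra_simps)
  also have "\<dots> = - (1 / q - 1)"
    using q by (simp add: diff_divide_distrib)
  finally have inv: "1 / q - 1 = - (t\<^sup>2 * ((a + b + t\<^sup>2 * a * b) / (q * (1 + q))))" by simp
  have "2 * (s + t\<^sup>2 * v) / q - 2 * s = 2 * s * (1 / q - 1) + t\<^sup>2 * (2 * (v * (1 / q)))"
    by (simp add: add_divide_distrib algebra_simps)
  then show ?thesis unfolding inv by (simp add: algebra_simps)
qed

lemma local_max_second_order:
  fixes A :: "real^'n^'n" and \<sigma> u :: "(real^'k)^'n"
  assumes max: "local_max_on (F_A A) sphere_prod \<sigma>" and tangent: "\<And>i. u $ i \<bullet> \<sigma> $ i = 0"
  shows "A \<bullet> (\<chi> i j. u $ i \<bullet> u $ j)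
           \<le> A \<bullet> (\<chi> i j. (\<sigma> $ i \<bullet> \<sigma> $ j) * (u $ i \<bullet> u $ i + u $ j \<bullet> u $ j) / 2)"
proof -
  define \<gamma> where "\<gamma> = sphere_shift \<sigma> u"
  define a where "a i = u $ i \<bullet> u $ i" for i
  define q where "q t i j = sqrt (1 + t\<^sup>2 * a i) * sqrt (1 + t\<^sup>2 * a j)" for t i j
  define N where "N t = (\<chi> i j. 2 * ((u $ i \<bullet> u $ j) / q t i j
      - (\<sigma> $ i \<bullet> \<sigma> $ j) * ((a i + a j + t\<^sup>2 * a i * a j) / (q t i j * (1 + q t i j)))))" for t
  have \<gamma>0: "\<gamma> 0 = \<sigma>" by (simp add: \<gamma>_def)
  have even_part: "(\<chi> i j. \<gamma> t $ i \<bullet> \<gamma> t $ j) + (\<chi> i j. \<gamma> (- t) $ i \<bullet> \<gamma> (- t) $ j)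
          - 2 *\<^sub>R (\<chi> i j. \<sigma> $ i \<bullet> \<sigma> $ j) = t\<^sup>2 *\<^sub>R N t" for t
  proof -
    have "\<gamma> t $ i \<bullet> \<gamma> t $ j + \<gamma> (- t) $ i \<bullet> \<gamma> (- t) $ j
            = 2 * (\<sigma> $ i \<bullet> \<sigma> $ j + t\<^sup>2 * (u $ i \<bullet> u $ j)) / q t i j" for i j
      unfolding \<gamma>_def sphere_shift_inner power2_minus add_divide_distrib[symmetric]
        inner_shifts_even_part q_def a_def ..
    then show ?thesis
      using normalized_second_difference[of "a _" "a _"]
      by (simp add: vec_eq_iff N_def q_def a_def)
  qed
  have diff: "F_A A (\<gamma> t) + F_A A (\<gamma> (- t)) - 2 * F_A A (\<gamma> 0) = t\<^sup>2 * (A \<bullet> N t)" for t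
  proof -
    have "F_A A (\<gamma> t) + F_A A (\<gamma> (- t)) - 2 * F_A A (\<gamma> 0)
        = A \<bullet> ((\<chi> i j. \<gamma> t $ i \<bullet> \<gamma> t $ j) + (\<chi> i j. \<gamma> (- t) $ i \<bullet> \<gamma> (- t) $ j)
            - 2 *\<^sub>R (\<chi> i j. \<sigma> $ i \<bullet> \<sigma> $ j))"
      unfolding F_A_eq_inner \<gamma>0 by (simp only: inner_add_right inner_diff_right inner_scaleR_right)
    also have "\<dots> = t\<^sup>2 * (A \<bullet> N t)" by (simp only: even_part inner_scaleR_right)
    finally show ?thesis .
  qed
  have "continuous_on UNIV (\<lambda>t. A \<bullet> N t)"
    unfolding N_def q_def a_def using radicand_pos
    by (intro continuous_intros) (auto simp: add_pos_nonneg less_imp_neq[symmetric])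
  then have "isCont (\<lambda>t. A \<bullet> N t) 0" by (simp add: continuous_on_eq_continuous_at)
  moreover have "\<forall>\<^sub>F t in at 0. F_A A (\<gamma> t) \<le> F_A A (\<gamma> 0)"
    using local_max_on_along_curve[OF max isCont_sphere_shift sphere_shift_zero
        sphere_shift_in_sphere_prod[OF local_max_on_row_unit[OF max] tangent]]
    unfolding \<gamma>_def by simp
  ultimately have "A \<bullet> N 0 \<le> 0"
    using diff by (intro second_difference_nonpos[where \<phi> = "\<lambda>t. F_A A (\<gamma> t)"])
  moreover have "N 0 = 2 *\<^sub>R ((\<chi> i j. u $ i \<bullet> u $ j)
      - (\<chi> i j. (\<sigma> $ i \<bullet> \<sigma> $ j) * (u $ i \<bullet> u $ i + u $ j \<bullet> u $ j) / 2))"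
    by (simp add: N_def q_def a_def vec_eq_iff algebra_simps)
  ultimately show ?thesis by (simp add: inner_diff_right)
qed

definition tangent_frame :: "('n \<Rightarrow> real^'n) \<Rightarrow> (real^'k)^'n \<Rightarrow> 'k \<Rightarrow> 'n \<Rightarrow> (real^'k)^'n" where
  "tangent_frame w \<sigma> a p = (\<chi> i. w p $ i *\<^sub>R (axis a 1 - \<sigma> $ i $ a *\<^sub>R \<sigma> $ i))"

lemma tangent_frame_orthogonal:
  assumes "\<sigma> $ i \<bullet> \<sigma> $ i = 1"
  shows "tangent_frame w \<sigma> a p $ i \<bullet> \<sigma> $ i = 0"
  using assms by (simp add: tangent_frame_def inner_diff_left inner_axis')

lemma sum_tangent_projections_inner:
  fixes x y :: "real^'k"
  assumes "x \<bullet> x = 1" "y \<bullet> y = 1"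
  shows "(\<Sum>a\<in>UNIV. (axis a 1 - x $ a *\<^sub>R x) \<bullet> (axis a 1 - y $ a *\<^sub>R y))
           = real CARD('k) - 2 + (x \<bullet> y)\<^sup>2"
proof -
  have "(\<Sum>a\<in>UNIV. (axis a 1 - x $ a *\<^sub>R x) \<bullet> (axis a 1 - y $ a *\<^sub>R y))
      = (\<Sum>a\<in>UNIV. 1 - y $ a * y $ a - x $ a * x $ a + (x \<bullet> y) * (x $ a * y $ a))"
    by (simp add: inner_diff_left inner_diff_right inner_axis inner_axis' algebra_simps)
  also have "\<dots> = real CARD('k) - y \<bullet> y - x \<bullet> x + (x \<bullet> y) * (x \<bullet> y)"
    by (simp add: sum.distrib sum_subtractf sum_distrib_left[symmetric] inner_vec_def)
  finally show ?thesis using assms by (simp add: power2_eq_square)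
qed

lemma sum_tangent_frame_inner:
  fixes \<sigma> :: "(real^'k)^'n"
  assumes "\<sigma> $ i \<bullet> \<sigma> $ i = 1" "\<sigma> $ j \<bullet> \<sigma> $ j = 1"
  shows "(\<Sum>a\<in>UNIV. \<Sum>p\<in>UNIV. tangent_frame w \<sigma> a p $ i \<bullet> tangent_frame w \<sigma> a p $ j)
           = gram w $ i $ j * (real CARD('k) - 2 + (\<sigma> $ i \<bullet> \<sigma> $ j)\<^sup>2)"
proof -
  have "(\<Sum>a\<in>UNIV. \<Sum>p\<in>UNIV. tangent_frame w \<sigma> a p $ i \<bullet> tangent_frame w \<sigma> a p $ j)
      = (\<Sum>a\<in>UNIV. gram w $ i $ j
            * ((axis a 1 - \<sigma> $ i $ a *\<^sub>R \<sigma> $ i) \<bullet> (axis a 1 - \<sigma> $ j $ a *\<^sub>R \<sigma> $ j)))"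
    by (simp add: tangent_frame_def gram_nth sum_distrib_right mult_ac)
  then show ?thesis
    by (simp add: sum_distrib_left[symmetric] sum_tangent_projections_inner assms)
qed

lemma local_max_feasible_gap:
  fixes A :: "real^'n^'n" and \<sigma> :: "(real^'k)^'n"
  assumes max: "local_max_on (F_A A) sphere_prod \<sigma>" and X: "psd X" "\<forall>i. X $ i $ i = 1"
  shows "(real CARD('k) - 1) * (A \<bullet> X)
           \<le> (real CARD('k) - 1) * F_A A \<sigma> + 2 * real CARD('n) * op_norm2 A"
proof -
  let ?k = "real CARD('k)" and ?L = "real CARD('n) * op_norm2 A"
  note unit = local_max_on_row_unit[OF max]
  define S where "S = (\<chi> i j. \<sigma> $ i \<bullet> \<sigma> $ j)"
  define Y where "Y = (\<chi> i j. X $ i $ j * (S $ i $ j * S $ i $ j))"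
  obtain w :: "'n \<Rightarrow> real^'n" where w: "X = gram w" using psd_gram_factorization[OF X(1)] by blast
  define u where "u = tangent_frame w \<sigma>"
  have "A \<bullet> (\<Sum>a\<in>UNIV. \<Sum>p\<in>UNIV. \<chi> i j. u a p $ i \<bullet> u a p $ j)
      \<le> A \<bullet> (\<Sum>a\<in>UNIV. \<Sum>p\<in>UNIV. \<chi> i j. S $ i $ j * (u a p $ i \<bullet> u a p $ i + u a p $ j \<bullet> u a p $ j) / 2)"
    unfolding inner_sum_right S_def vec_lambda_beta u_def
    by (intro sum_mono local_max_second_order[OF max] tangent_frame_orthogonal unit)
  moreover have "(\<Sum>a\<in>UNIV. \<Sum>p\<in>UNIV. \<chi> i j. u a p $ i \<bullet> u a p $ j) = (?k - 2) *\<^sub>R X + Y"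
    by (simp add: vec_eq_iff u_def w Y_def S_def sum_tangent_frame_inner unit algebra_simps
        power2_eq_square)
  moreover have "(\<Sum>a\<in>UNIV. \<Sum>p\<in>UNIV. \<chi> i j. S $ i $ j * (u a p $ i \<bullet> u a p $ i + u a p $ j \<bullet> u a p $ j) / 2)
      = (?k - 1) *\<^sub>R S"
    using X(2) unfolding w
    by (simp add: vec_eq_iff sum_distrib_left[symmetric] sum_divide_distrib[symmetric] sum.distrib
        u_def S_def sum_tangent_frame_inner unit field_simps)
  ultimately have "(?k - 2) * (A \<bullet> X) + A \<bullet> Y \<le> (?k - 1) * F_A A \<sigma>"
    by (simp add: inner_add_right F_A_eq_inner S_def)
  moreover have "psd Y"
    unfolding Y_def S_def using psd_hadamard[OF X(1) psd_hadamard[OF psd_inner_matrix psd_inner_matrix]]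
    by simp
  then have "\<bar>A \<bullet> Y\<bar> \<le> ?L" by (rule abs_inner_unit_diag_psd_le) (simp add: X(2) Y_def S_def unit)
  moreover have "\<bar>A \<bullet> X\<bar> \<le> ?L" by (rule abs_inner_unit_diag_psd_le[OF X])
  ultimately show ?thesis by (simp add: algebra_simps abs_le_iff)
qed

lemma two_div_pred_le_eight_div_sqrt:
  fixes k :: real
  assumes "2 \<le> k"
  shows "2 / (k - 1) \<le> 8 / sqrt k"
proof -
  have "sqrt k \<le> k" using assms by (simp add: real_sqrt_le_iff' power2_eq_square)
  then have "2 * sqrt k \<le> 8 * (k - 1)" using assms by argo
  moreover have "0 < sqrt k" "0 < k - 1" using assms by simp_all
  ultimately show ?thesis by (simp add: frac_le_eq divide_simps)
qed

theorem theorem1: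
  fixes A :: "real^'n^'n" and \<sigma> :: "(real^'k)^'n"
  assumes "CARD('k) \<ge> 2"
    and "transpose A = A"
    and "local_max_on (F_A A) sphere_prod \<sigma>"
  shows "SDP A \<ge> F_A A \<sigma> \<and>
         F_A A \<sigma> \<ge> SDP A - 8 / sqrt (real CARD('k)) * real CARD('n) * op_norm2 A"
proof
  let ?k = "real CARD('k)" and ?L = "real CARD('n) * op_norm2 A"
  have k: "2 \<le> ?k" using assms(1) by simp
  have "\<forall>i. (\<chi> i j. \<sigma> $ i \<bullet> \<sigma> $ j) $ i $ i = 1"
    using local_max_on_row_unit[OF assms(3)] by simp
  with psd_inner_matrix show "F_A A \<sigma> \<le> SDP A"
    unfolding F_A_eq_inner by (rule SDP_upper)
  have "SDP A \<le> F_A A \<sigma> + 2 * ?L / (?k - 1)"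
  proof (rule SDP_least)
    fix X :: "real^'n^'n" assume "psd X" "\<forall>i. X $ i $ i = 1"
    with local_max_feasible_gap[OF assms(3)] k show "A \<bullet> X \<le> F_A A \<sigma> + 2 * ?L / (?k - 1)"
      by (simp add: field_simps)
  qed
  moreover have "2 * ?L / (?k - 1) \<le> 8 / sqrt ?k * real CARD('n) * op_norm2 A"
    using mult_right_mono[OF two_div_pred_le_eight_div_sqrt[OF k], of ?L]
      onorm_pos_le[OF matrix_vector_mul_bounded_linear[of A]]
    by (simp add: op_norm2_def mult.assoc)
  ultimately show "SDP A - 8 / sqrt ?k * real CARD('n) * op_norm2 A \<le> F_A A \<sigma>" by linarith
qed

end
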